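(* Let $\{(\mathbf{x}^k,\mathbf{r}^k,\boldsymbol{\lambda}^k)\}$ be generated by Algorithm 2 under the bounded-delay assumption, let $k\ge0$ and $\alpha>0$. Then for any $\mathbf{x}$ independent of $i_k$ with $\mathbf{A}\mathbf{x}=\mathbf{b}$, $$\begin{aligned}&\mathbb{E}_{i_k}\Big[F(\mathbf{x}^{k+1})-F(\mathbf{x})-\langle\boldsymbol{\lambda}^{k+1},\mathbf{r}^{k+1}\rangle+(\beta-\rho)\|\mathbf{r}^{k+1}\|^2-\tfrac{\beta}{2}\|\mathbf{r}^{k+1}\|^2+\tfrac12\|\mathbf{x}^{k+1}-\mathbf{x}\|_{\mathbf{P}}^2\Big]+\tfrac12\mathbb{E}_{i_k}\|\mathbf{x}^{k+1}-\mathbf{x}^k\|^2_{\mathbf{P}-\mathbf{L}-\alpha L_c\mathbf{I}-\beta\mathbf{A}^\top\mathbf{A}}\\&-\frac{\kappa L_r\tau/\alpha+2L_r\tau}{2m}\sum_{d=k-\tau}^{k-1}\|\mathbf{x}^{d+1}-\mathbf{x}^d\|^2-\frac{1}{2m}\sum_{d=k-\tau}^{k-1}\|\mathbf{x}^{d+1}-\mathbf{x}^d\|^2_{\mathbf{L}}\\&\le\Big(1-\frac1m\Big)\Big[F(\mathbf{x}^k)-F(\mathbf{x})-\langle\boldsymbol{\lambda}^k,\mathbf{r}^k\rangle+\beta\|\mathbf{r}^k\|^2\Big]-\tfrac{\beta}{2}\|\mathbf{r}^k\|^2+\tfrac12\|\mathbf{x}^k-\mathbf{x}\|_{\mathbf{P}}^2,\end{aligned}$$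 where $\mathbf{P}=\mathrm{blkdiag}(\mathbf{P}_1,\ldots,\mathbf{P}_m)$, $L_c=\max_iL_i$, $\kappa=L_r/L_c$, $\mathbf{x}^d:=\mathbf{x}^0$ for $d<0$, and $\|\mathbf{z}\|_{\mathbf{M}}^2:=\mathbf{z}^\top\mathbf{M}\mathbf{z}$ for symmetric $\mathbf{M}$.
   Context: Problem: $\min_{\mathbf{x}} F(\mathbf{x}):=f(\mathbf{x})+g(\mathbf{x})$ s.t. $\mathbf{A}\mathbf{x}=\mathbf{b}$, where $\mathbf{x}=(\mathbf{x}_1;\ldots;\mathbf{x}_m)$ with blocks $\mathbf{x}_i\in\mathbb{R}^{n_i}$, $g(\mathbf{x})=\sum_{i=1}^m g_i(\mathbf{x}_i)$, $\mathbf{A}=[\mathbf{A}_1,\ldots,\mathbf{A}_m]$ with $\mathbf{A}_i\in\mathbb{R}^{q\times n_i}$, $\mathbf{b}\in\mathbb{R}^q$; $f$ is convex and continuously differentiable, each $g_i$ is proper, convex, lower semicontinuous. $\mathbf{U}_i\mathbf{y}$ denotes the vector whose $i$-th block is $\mathbf{y}_i$ and other blocks zero. Assumption (gradient Lipschitz continuity): there are constants $L_i>0$ and $L_r$ with $\|\nabla_i f(\mathbf{x}+\mathbf{U}_i\mathbf{y})-\nabla_i f(\mathbf{x})\|\le L_i\|\mathbf{y}_i\|$ and $\|\nabla f(\mathbf{x}+\mathbf{U}_i\mathbf{y})-\nabla f(\mathbf{x})\|\le L_r\|\mathbf{y}_i\|$ for all $i,\mathbf{x},\mathbf{y}$. $\mathbf{L}=\mathrm{blkdiag}(L_1\mathbf{I}_{n_1},\ldots,L_m\mathbf{I}_{n_m})$.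 Algorithm 2 (async-parallel randomized primal-dual block update, as analyzed): choose $\mathbf{x}^0$, $\boldsymbol{\lambda}^0=\mathbf{0}$, $\mathbf{r}^0=\mathbf{A}\mathbf{x}^0-\mathbf{b}$, $\beta>0,\rho>0$, symmetric PSD $\mathbf{P}_i$. At iteration $k$, a block index $i_k\in\{1,\ldots,m\}$ and a (possibly outdated) point $\hat{\mathbf{x}}^k$ are used; $\mathbf{x}_i^{k+1}=\mathbf{x}_i^k$ for $i\ne i_k$ and $$\mathbf{x}_{i_k}^{k+1}\in\arg\min_{\mathbf{x}_{i_k}}\big\langle\nabla_{i_k} f(\hat{\mathbf{x}}^k)-\mathbf{A}_{i_k}^\top(\boldsymbol{\lambda}^k-\beta\mathbf{r}^k),\mathbf{x}_{i_k}\big\rangle+g_{i_k}(\mathbf{x}_{i_k})+\tfrac12\|\mathbf{x}_{i_k}-\mathbf{x}_{i_k}^k\|_{\mathbf{P}_{i_k}}^2;$$ then $\mathbf{r}^{k+1}=\mathbf{r}^k+\mathbf{A}_{i_k}(\mathbf{x}_{i_k}^{k+1}-\mathbf{x}_{i_k}^k)$ and $\boldsymbol{\lambda}^{k+1}=\boldsymbol{\lambda}^k-\rho\mathbf{r}^{k+1}$. Conditionally on the history before iteration $k$ (which determines $\mathbf{x}^k,\mathbf{r}^k,\boldsymbol{\lambda}^k$ and $\hat{\mathbf{x}}^k$), $i_k$ is uniformly distributed on $\{1,\ldots,m\}$; $\mathbb{E}_{i_k}$ denotes this conditional expectation, and "$\mathbf{x}$ independent of $i_k$" means $\mathbf{x}$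 is determined by that history. Assumption (bounded delay): there is an integer $\tau\ge0$ such that $\hat{\mathbf{x}}^k=\mathbf{x}^k+\sum_{d\in J(k)}(\mathbf{x}^d-\mathbf{x}^{d+1})$ for some subset $J(k)\subseteq\{k-\tau,\ldots,k-1\}$. *)

theory Defs
  imports "HOL-Analysis.Analysis"
begin

text \<open>Coordinates of R^N are the finite type 'n; blk c is the block index of coordinate c.
  blockproj blk i y is U_i y_i: keeps the i-th block of y and zeroes the others.\<close>
definition blockproj :: "('n::finite \<Rightarrow> nat) \<Rightarrow> nat \<Rightarrow> real^'n \<Rightarrow> real^'n" where
  "blockproj blk i y = (\<chi> c. if blk c = i then y $ c else 0)"

definition qf :: "real^'n^'n \<Rightarrow> real^'n \<Rightarrow> real" where
  "qf M z = z \<bullet> (M *v z)"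

definition blkdiagL :: "('n::finite \<Rightarrow> nat) \<Rightarrow> (nat \<Rightarrow> real) \<Rightarrow> real^'n^'n" where
  "blkdiagL blk L = (\<chi> c c'. if c = c' then L (blk c) else 0)"

definition proper_fun :: "('a \<Rightarrow> ereal) \<Rightarrow> bool" where
  "proper_fun g \<longleftrightarrow> (\<forall>x. g x \<noteq> -\<infinity>) \<and> (\<exists>x. g x \<noteq> \<infinity>)"

definition convex_fun :: "('a::real_vector \<Rightarrow> ereal) \<Rightarrow> bool" where
  "convex_fun g \<longleftrightarrow> convex {(x, t::real). g x \<le> ereal t}"

definition lsc_fun :: "('a::topological_space \<Rightarrow> ereal) \<Rightarrow> bool" where
  "lsc_fun g \<longleftrightarrow> (\<forall>x. g x \<le> Liminf (at x) g)"

end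

theory Submission
  imports Defs
begin

text \<open>The block update of iteration \<open>k\<close> is a linearized proximal step, so its optimality
  condition and the convexity of \<open>g\<^sub>j\<close> give a three-point inequality; together with the
  block descent lemma for \<open>f\<close> and the multiplier update this bounds the new
  Lagrangian-type quantity for each outcome \<open>i\<^sub>k = j\<close>, up to the error
  \<open>\<nabla>f(x\<^sup>k) - \<nabla>f(xhat\<^sup>k)\<close> caused by the delay. Averaging over the uniformly
  chosen block turns block-wise quantities into full ones, since \<open>\<Sum>\<^sub>j U\<^sub>j y = y\<close>.
  The delayed point differs from \<open>x\<^sup>k\<close> by at most \<open>\<tau>\<close> past block steps: Lipschitz
  continuity of \<open>\<nabla>f\<close> along them bounds the error, and a descent estimate along them
  compares \<open>f(x\<^sup>k)\<close> with the linearization at \<open>xhat\<^sup>k\<close>, which convexity bounds by \<open>f(x)\<close>.\<close>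

section \<open>Gradient inequalities along block steps\<close>

lemma has_real_derivative_along_line:
  fixes f :: "'a::real_inner \<Rightarrow> real"
  assumes "\<And>y. (f has_derivative (\<lambda>h. grad y \<bullet> h)) (at y)"
  shows "((\<lambda>t. f (y + t *\<^sub>R d)) has_real_derivative (grad (y + t *\<^sub>R d) \<bullet> d)) (at t)"
proof -
  have "((\<lambda>t. y + t *\<^sub>R d) has_derivative (\<lambda>h. h *\<^sub>R d)) (at t)"
    by (auto intro!: derivative_eq_intros)
  then have "((\<lambda>t. f (y + t *\<^sub>R d)) has_derivative (\<lambda>h. grad (y + t *\<^sub>R d) \<bullet> (h *\<^sub>R d))) (at t)"
    using has_derivative_compose assms by blast
  then show ?thesis
    by (rule has_derivative_imp_has_field_derivative) (simp add: inner_scaleR_right)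
qed

lemma convex_on_gradient_inequality:
  fixes f :: "'a::real_inner \<Rightarrow> real"
  assumes "convex_on UNIV f" and "\<And>y. (f has_derivative (\<lambda>h. grad y \<bullet> h)) (at y)"
  shows "f y + grad y \<bullet> (x - y) \<le> f x"
proof -
  let ?p = "\<lambda>t. f (y + t *\<^sub>R (x - y))"
  have "convex_on UNIV ?p"
  proof (rule convex_onI)
    fix t a b :: real assume "0 < t" "t < 1"
    moreover have "y + ((1 - t) * a + t * b) *\<^sub>R (x - y)
        = (1 - t) *\<^sub>R (y + a *\<^sub>R (x - y)) + t *\<^sub>R (y + b *\<^sub>R (x - y))"
      by (simp add: algebra_simps)
    ultimately show "?p ((1 - t) *\<^sub>R a + t *\<^sub>R b) \<le> (1 - t) * ?p a + t * ?p b"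
      using convex_onD[OF assms(1), of t] by simp
  qed simp
  then have "?p 1 - ?p 0 \<ge> (grad (y + 0 *\<^sub>R (x - y)) \<bullet> (x - y)) * (1 - 0)"
    by (rule convex_on_imp_above_tangent)
      (use has_real_derivative_along_line[OF assms(2), of y "x - y" 0] in auto)
  then show ?thesis by simp
qed

lemma blockproj_component [simp]: "blockproj blk i y $ c = (if blk c = i then y $ c else 0)"
  by (simp add: blockproj_def)

lemma blockproj_add: "blockproj blk i (u + v) = blockproj blk i u + blockproj blk i v"
  by (simp add: vec_eq_iff)

lemma blockproj_diff: "blockproj blk i (u - v) = blockproj blk i u - blockproj blk i v"
  by (simp add: vec_eq_iff)

lemma blockproj_scaleR: "blockproj blk i (t *\<^sub>R u) = t *\<^sub>R blockproj blk i u"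
  by (simp add: vec_eq_iff)

lemma blockproj_idem [simp]: "blockproj blk i (blockproj blk i u) = blockproj blk i u"
  by (simp add: vec_eq_iff)

lemma blockproj_inner_commute: "blockproj blk i u \<bullet> v = u \<bullet> blockproj blk i v"
  unfolding inner_vec_def by (intro sum.cong) auto

lemma sum_blockproj:
  assumes "\<And>c. blk c < m"
  shows "(\<Sum>j<m. blockproj blk j y) = y"
  using assms by (simp add: vec_eq_iff sum_component sum.delta')

lemma sum_norm_blockproj_sq:
  assumes "\<And>c. blk c < m"
  shows "(\<Sum>j<m. (norm (blockproj blk j y))\<^sup>2) = (norm y)\<^sup>2"
proof -
  have "(\<Sum>j<m. (norm (blockproj blk j y))\<^sup>2)
      = (\<Sum>j<m. \<Sum>c\<in>UNIV. if blk c = j then (y $ c)\<^sup>2 else 0)"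
    unfolding power2_norm_eq_inner inner_vec_def
    by (intro sum.cong refl) (auto simp: power2_eq_square)
  also have "\<dots> = (\<Sum>c\<in>UNIV. \<Sum>j<m. if blk c = j then (y $ c)\<^sup>2 else 0)"
    by (rule sum.swap)
  also have "\<dots> = (norm y)\<^sup>2"
    using assms unfolding power2_norm_eq_inner inner_vec_def by (simp add: sum.delta' power2_eq_square)
  finally show ?thesis .
qed

text \<open>The one-dimensional function
  \<open>t \<mapsto> f (y + t d) - t \<langle>\<nabla>f y, d\<rangle> - L\<^sub>i t\<^sup>2 \<parallel>d\<parallel>\<^sup>2 / 2\<close> is nonincreasing on \<open>[0, 1]\<close>.\<close>
lemma block_descent_lemma:
  fixes f :: "real^'n::finite \<Rightarrow> real"
  assumes f_grad: "\<And>y. (f has_derivative (\<lambda>h. grad y \<bullet> h)) (at y)"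
    and Lip: "\<And>z y. norm (blockproj blk i (grad (z + blockproj blk i y) - grad z))
                  \<le> Li * norm (blockproj blk i y)"
  shows "f (y + blockproj blk i v)
           \<le> f y + grad y \<bullet> blockproj blk i v + Li / 2 * (norm (blockproj blk i v))\<^sup>2"
proof -
  define d where "d = blockproj blk i v"
  define h where "h = (\<lambda>t. f (y + t *\<^sub>R d) - t * (grad y \<bullet> d) - Li / 2 * t\<^sup>2 * (norm d)\<^sup>2)"
  have "h 1 \<le> h 0"
  proof (rule DERIV_nonpos_imp_nonincreasing[of 0 1 h])
    fix t :: real assume t: "0 \<le> t" "t \<le> 1"
    have deriv: "(h has_real_derivative
        (grad (y + t *\<^sub>R d) \<bullet> d - grad y \<bullet> d - Li / 2 * (2 * t) * (norm d)\<^sup>2)) (at t)"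
      unfolding h_def
      by (intro derivative_eq_intros has_real_derivative_along_line[OF f_grad])
        (auto intro: has_real_derivative_along_line[OF f_grad])
    have "(grad (y + t *\<^sub>R d) - grad y) \<bullet> d
        = blockproj blk i (grad (y + blockproj blk i (t *\<^sub>R v)) - grad y) \<bullet> d"
      by (simp add: d_def blockproj_scaleR blockproj_inner_commute)
    also have "\<dots> \<le> norm (blockproj blk i (grad (y + blockproj blk i (t *\<^sub>R v)) - grad y)) * norm d"
      by (rule norm_cauchy_schwarz)
    also have "\<dots> \<le> Li * norm (blockproj blk i (t *\<^sub>R v)) * norm d"
      using Lip by (intro mult_right_mono) auto
    also have "\<dots> = Li * t * (norm d)\<^sup>2"
      using t by (simp add: d_def blockproj_scaleR power2_eq_square)
    finally have "grad (y + t *\<^sub>R d) \<bullet> d - grad y \<bullet> d - Li / 2 * (2 * t) * (norm d)\<^sup>2 \<le> 0"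
      by (simp add: inner_diff_left)
    with deriv show "\<exists>y. DERIV h t :> y \<and> y \<le> 0" by blast
  qed simp
  then show ?thesis by (simp add: h_def d_def)
qed

lemma norm_grad_sum_block_steps_le:
  fixes grad :: "real^'n::finite \<Rightarrow> real^'n"
  assumes "finite S" and "\<And>s. s \<in> S \<Longrightarrow> B s < m \<and> blockproj blk (B s) (D s) = D s"
    and Lip_r: "\<And>i z y. i < m \<Longrightarrow> norm (grad (z + blockproj blk i y) - grad z)
                  \<le> Lr * norm (blockproj blk i y)"
  shows "norm (grad (y + (\<Sum>s\<in>S. D s)) - grad y) \<le> Lr * (\<Sum>s\<in>S. norm (D s))"
  using assms(1,2)
proof (induction S arbitrary: y rule: finite_induct)
  case empty
  then show ?case by simp
next
  case (insert a S)
  have "norm (grad (y + (\<Sum>s\<in>insert a S. D s)) - grad y)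
      = norm ((grad ((y + D a) + (\<Sum>s\<in>S. D s)) - grad (y + D a)) + (grad (y + D a) - grad y))"
    using insert.hyps by (simp add: add.assoc)
  also have "\<dots> \<le> norm (grad ((y + D a) + (\<Sum>s\<in>S. D s)) - grad (y + D a))
                  + norm (grad (y + D a) - grad y)"
    by (rule norm_triangle_ineq)
  also have "\<dots> \<le> Lr * (\<Sum>s\<in>S. norm (D s)) + Lr * norm (D a)"
    using insert Lip_r[of "B a" y "D a"] by (intro add_mono) auto
  finally show ?case
    using insert.hyps by (simp add: distrib_left)
qed

text \<open>The cross terms between different block steps are controlled by the global
  constant \<open>L\<^sub>r\<close>.\<close>
lemma block_steps_descent_lemma:
  fixes f :: "real^'n::finite \<Rightarrow> real"
  assumes "finite S" and "\<And>s. s \<in> S \<Longrightarrow> B s < m \<and> blockproj blk (B s) (D s) = D s"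
    and f_grad: "\<And>y. (f has_derivative (\<lambda>h. grad y \<bullet> h)) (at y)"
    and Lip_i: "\<And>i z y. i < m \<Longrightarrow> norm (blockproj blk i (grad (z + blockproj blk i y) - grad z))
                  \<le> L i * norm (blockproj blk i y)"
    and Lip_r: "\<And>i z y. i < m \<Longrightarrow> norm (grad (z + blockproj blk i y) - grad z)
                  \<le> Lr * norm (blockproj blk i y)"
    and Lr_nonneg: "Lr \<ge> 0"
  shows "f (y + (\<Sum>s\<in>S. D s)) \<le> f y + grad y \<bullet> (\<Sum>s\<in>S. D s)
           + (\<Sum>s\<in>S. L (B s) / 2 * (norm (D s))\<^sup>2) + Lr / 2 * (\<Sum>s\<in>S. norm (D s))\<^sup>2"
  using assms(1,2)
proof (induction S arbitrary: y rule: finite_induct)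
  case empty
  then show ?case by simp
next
  case (insert a S)
  let ?S = "\<Sum>s\<in>S. D s" and ?N = "\<Sum>s\<in>S. norm (D s)"
  have a: "B a < m" "blockproj blk (B a) (D a) = D a"
    using insert.prems by auto
  have IH: "f ((y + D a) + ?S) \<le> f (y + D a) + grad (y + D a) \<bullet> ?S
           + (\<Sum>s\<in>S. L (B s) / 2 * (norm (D s))\<^sup>2) + Lr / 2 * ?N\<^sup>2"
    using insert by auto
  have step: "f (y + D a) \<le> f y + grad y \<bullet> D a + L (B a) / 2 * (norm (D a))\<^sup>2"
    using block_descent_lemma[OF f_grad Lip_i[OF a(1)], of y "D a"] a by simp
  have "(grad (y + D a) - grad y) \<bullet> ?S \<le> norm (grad (y + D a) - grad y) * norm ?S"
    by (rule norm_cauchy_schwarz)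
  also have "\<dots> \<le> Lr * norm (D a) * ?N"
    using Lip_r[of "B a" y "D a"] a norm_sum[of D S] Lr_nonneg by (intro mult_mono) auto
  finally have cross: "grad (y + D a) \<bullet> ?S \<le> grad y \<bullet> ?S + Lr * norm (D a) * ?N"
    by (simp add: inner_diff_left)
  have "Lr / 2 * ?N\<^sup>2 + Lr * norm (D a) * ?N \<le> Lr / 2 * (norm (D a) + ?N)\<^sup>2"
    using Lr_nonneg by (simp add: power2_eq_square algebra_simps)
  then show ?case
    using IH step cross insert.hyps by (simp add: add.assoc inner_add_right)
qed

section \<open>Quadratic forms\<close>

lemma inner_matrix_vector_sym:
  fixes P :: "real^'n::finite^'n"
  assumes "transpose P = P"
  shows "v \<bullet> (P *v u) = u \<bullet> (P *v v)"
proof -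
  have "v \<bullet> (P *v u) = (transpose P *v v) \<bullet> u"
    by (simp add: dot_lmul_matrix[symmetric])
  then show ?thesis using assms by (simp add: inner_commute)
qed

lemma qf_add:
  fixes P :: "real^'n::finite^'n"
  assumes "transpose P = P"
  shows "qf P (u + v) = qf P u + 2 * (u \<bullet> (P *v v)) + qf P v"
  using inner_matrix_vector_sym[OF assms, of v u]
  by (simp add: qf_def matrix_vector_right_distrib inner_add_left inner_add_right)

lemma qf_scaleR: "qf P (t *\<^sub>R u) = t\<^sup>2 * qf P u"
  by (simp add: qf_def matrix_vector_mult_scaleR power2_eq_square)

lemma qf_uminus [simp]: "qf P (- u) = qf P u"
  using qf_scaleR[of P "-1" u] by simp

lemma matrix_vector_mult_blockproj:
  fixes P :: "real^'n::finite^'n"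
  assumes "\<And>c c'. blk c \<noteq> blk c' \<Longrightarrow> P $ c $ c' = 0" and "blockproj blk j u = u"
  shows "blockproj blk j (P *v u) = P *v u"
proof -
  have u: "u $ c = 0" if "blk c \<noteq> j" for c
    using that assms(2) by (metis blockproj_component)
  have "(P *v u) $ c = 0" if "blk c \<noteq> j" for c
    unfolding matrix_vector_mult_def using that assms(1) u
    by (auto intro!: sum.neutral) metis
  then show ?thesis by (simp add: vec_eq_iff)
qed

lemma qf_add_blockproj:
  fixes P :: "real^'n::finite^'n"
  assumes "\<And>c c'. blk c \<noteq> blk c' \<Longrightarrow> P $ c $ c' = 0" and "transpose P = P"
    and "blockproj blk j u = u"
  shows "qf P (w + u) = qf P w - qf P (blockproj blk j w) + qf P (blockproj blk j (w + u))"
proof -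
  have "blockproj blk j w \<bullet> (P *v u) = w \<bullet> (P *v u)"
    using matrix_vector_mult_blockproj[OF assms(1,3)] by (metis blockproj_inner_commute)
  then show ?thesis
    using assms(3) by (simp add: blockproj_add qf_add[OF assms(2)])
qed

lemma blkdiagL_mult_component: "(blkdiagL blk L *v u) $ c = L (blk c) * u $ c"
proof -
  have "(blkdiagL blk L *v u) $ c = (\<Sum>c'\<in>UNIV. (if c = c' then L (blk c) else 0) * u $ c')"
    by (simp add: matrix_vector_mult_def blkdiagL_def)
  also have "\<dots> = (\<Sum>c'\<in>UNIV. if c = c' then L (blk c) * u $ c' else 0)"
    by (intro sum.cong) auto
  finally show ?thesis by simp
qed

lemma qf_blkdiagL: "qf (blkdiagL blk L) u = (\<Sum>c\<in>UNIV. L (blk c) * (u $ c)\<^sup>2)"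
  by (simp add: qf_def inner_vec_def blkdiagL_mult_component algebra_simps power2_eq_square)

lemma qf_blkdiagL_nonneg:
  assumes "\<And>c. L (blk c) \<ge> 0"
  shows "qf (blkdiagL blk L) u \<ge> 0"
  unfolding qf_blkdiagL using assms by (intro sum_nonneg) simp

lemma qf_blkdiagL_blockproj:
  assumes "blockproj blk j u = u"
  shows "qf (blkdiagL blk L) u = L j * (norm u)\<^sup>2"
proof -
  have u0: "u $ c = 0" if "blk c \<noteq> j" for c
    using that assms by (metis blockproj_component)
  have "qf (blkdiagL blk L) u = (\<Sum>c\<in>UNIV. L j * (u $ c)\<^sup>2)"
    unfolding qf_blkdiagL
    by (intro sum.cong refl) (metis u0 mult_zero_right zero_power2)
  then show ?thesis
    unfolding power2_norm_eq_inner inner_vec_def by (simp add: sum_distrib_left power2_eq_square)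
qed

lemma qf_step_matrix_blockproj:
  fixes P :: "real^'n::finite^'n" and A :: "real^'n^'q::finite"
  assumes "blockproj blk j u = u"
  shows "qf (P - blkdiagL blk L - c *\<^sub>R mat 1 - beta *\<^sub>R (transpose A ** A)) u
       = qf P u - L j * (norm u)\<^sup>2 - c * (norm u)\<^sup>2 - beta * (norm (A *v u))\<^sup>2"
proof -
  have "u \<bullet> ((transpose A ** A) *v u) = (A *v u) \<bullet> (A *v u)"
    by (simp add: matrix_vector_mul_assoc[symmetric] dot_lmul_matrix[symmetric] inner_commute)
  then show ?thesis
    using qf_blkdiagL_blockproj[OF assms, of L] unfolding qf_def
    by (simp add: matrix_vector_mult_diff_rdistrib scaleR_matrix_vector_assoc[symmetric]
        inner_diff_right power2_norm_eq_inner)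
qed

section \<open>The linearized proximal block step\<close>

lemma le_of_le_add_mult_small:
  fixes a b c :: real
  assumes "\<And>t. 0 < t \<Longrightarrow> t < 1 \<Longrightarrow> a \<le> b + t * c"
  shows "a \<le> b"
proof (rule ccontr)
  assume "\<not> a \<le> b"
  moreover have "a \<le> b + 1/2 * c"
    using assms[of "1/2"] by simp
  ultimately have ab: "a > b" and c: "c > 0"
    by auto
  define t where "t = min (1/2) ((a - b) / (2 * c))"
  have t: "0 < t" "t < 1"
    using ab c by (auto simp: t_def)
  have "t * c \<le> (a - b) / (2 * c) * c"
    using c by (intro mult_right_mono) (auto simp: t_def)
  then have "b + t * c < a"
    using ab c by simp
  with assms[OF t] show False by simp
qed

text \<open>Compare the minimizer with the points of the segment towards \<open>z\<close> and let the step
  length tend to \<open>0\<close>.\<close>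
lemma block_prox_optimality:
  fixes h :: "real^'n::finite \<Rightarrow> ereal" and P :: "real^'n^'n"
  assumes h_convex: "convex_fun h"
    and min: "\<And>z. (\<And>c. blk c \<noteq> j \<Longrightarrow> z $ c = y $ c) \<Longrightarrow>
        ereal (q \<bullet> Y + 1/2 * qf P (blockproj blk j (Y - y))) + h Y
        \<le> ereal (q \<bullet> z + 1/2 * qf P (blockproj blk j (z - y))) + h z"
    and Y_off: "\<And>c. blk c \<noteq> j \<Longrightarrow> Y $ c = y $ c"
    and z_off: "\<And>c. blk c \<noteq> j \<Longrightarrow> z $ c = y $ c"
    and hY: "h Y = ereal a" and hz: "h z = ereal b"
    and P_sym: "transpose P = P"
  shows "a \<le> q \<bullet> (z - Y) + blockproj blk j (Y - y) \<bullet> (P *v blockproj blk j (z - Y)) + b"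
proof (rule le_of_le_add_mult_small)
  fix t :: real assume t: "0 < t" "t < 1"
  define u where "u = blockproj blk j (Y - y)"
  define w where "w = blockproj blk j (z - Y)"
  define zt where "zt = (1 - t) *\<^sub>R Y + t *\<^sub>R z"
  have "(1 - t) *\<^sub>R (Y, a) + t *\<^sub>R (z, b) \<in> {(x, s::real). h x \<le> ereal s}"
    using h_convex hY hz t unfolding convex_fun_def
    by (intro convexD[where s = "{(x, s::real). h x \<le> ereal s}"]) auto
  then have h_zt: "h zt \<le> ereal ((1 - t) * a + t * b)"
    by (simp add: zt_def)
  have "ereal (q \<bullet> Y + 1/2 * qf P u) + ereal a \<le> ereal (q \<bullet> zt + 1/2 * qf P (u + t *\<^sub>R w)) + h zt"
  proof -
    have "blockproj blk j (zt - y) = u + t *\<^sub>R w"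
      by (simp add: u_def w_def zt_def vec_eq_iff algebra_simps)
    moreover have "zt $ c = y $ c" if "blk c \<noteq> j" for c
      using Y_off z_off that by (simp add: zt_def algebra_simps)
    ultimately show ?thesis
      using min[of zt] hY by (simp add: u_def)
  qed
  also have "\<dots> \<le> ereal (q \<bullet> zt + 1/2 * qf P (u + t *\<^sub>R w)) + ereal ((1 - t) * a + t * b)"
    using h_zt by (rule add_left_mono)
  finally have "q \<bullet> Y + 1/2 * qf P u + a \<le> q \<bullet> zt + 1/2 * qf P (u + t *\<^sub>R w) + ((1 - t) * a + t * b)"
    by simp
  moreover have "q \<bullet> zt = q \<bullet> Y + t * (q \<bullet> (z - Y))"
    by (simp add: zt_def inner_add_right inner_diff_right algebra_simps)
  moreover have "qf P (u + t *\<^sub>R w) = qf P u + 2 * t * (u \<bullet> (P *v w)) + t\<^sup>2 * qf P w"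
    by (simp add: qf_add[OF P_sym] qf_scaleR matrix_vector_mult_scaleR)
  ultimately have "t * a \<le> t * (q \<bullet> (z - Y) + u \<bullet> (P *v w) + b + t * (1/2 * qf P w))"
    by (simp add: algebra_simps power2_eq_square)
  then show "a \<le> q \<bullet> (z - Y) + u \<bullet> (P *v w) + b + t * (1/2 * qf P w)"
    using t by simp
qed

lemma block_prox_three_point:
  fixes h :: "real^'n::finite \<Rightarrow> ereal" and P :: "real^'n^'n"
  assumes "convex_fun h"
    and "\<And>z. (\<And>c. blk c \<noteq> j \<Longrightarrow> z $ c = y $ c) \<Longrightarrow>
        ereal (q \<bullet> Y + 1/2 * qf P (blockproj blk j (Y - y))) + h Y
        \<le> ereal (q \<bullet> z + 1/2 * qf P (blockproj blk j (z - y))) + h z"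
    and "\<And>c. blk c \<noteq> j \<Longrightarrow> Y $ c = y $ c"
    and "\<And>c. blk c \<noteq> j \<Longrightarrow> z $ c = y $ c"
    and "h Y = ereal a" and "h z = ereal b"
    and P_sym: "transpose P = P"
  shows "a + q \<bullet> (Y - z) \<le> b + 1/2 * qf P (blockproj blk j (z - y))
           - 1/2 * qf P (blockproj blk j (Y - y)) - 1/2 * qf P (blockproj blk j (z - Y))"
proof -
  have "blockproj blk j (z - y) = blockproj blk j (Y - y) + blockproj blk j (z - Y)"
    by (simp add: blockproj_diff)
  then have "qf P (blockproj blk j (z - y)) = qf P (blockproj blk j (Y - y))
      + 2 * (blockproj blk j (Y - y) \<bullet> (P *v blockproj blk j (z - Y))) + qf P (blockproj blk j (z - Y))"
    by (simp add: qf_add[OF P_sym])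
  then show ?thesis
    using block_prox_optimality[OF assms] by (simp add: inner_diff_right algebra_simps)
qed

section \<open>One iteration of the algorithm\<close>

lemma mult_le_sq_div_add_sq:
  fixes a b c :: real
  assumes "c > 0"
  shows "a * b \<le> a\<^sup>2 / (2 * c) + c / 2 * b\<^sup>2"
proof -
  have "a\<^sup>2 / (2 * c) + c / 2 * b\<^sup>2 - a * b = (a - c * b)\<^sup>2 / (2 * c)"
    using assms by (simp add: field_simps power2_eq_square)
  moreover have "(a - c * b)\<^sup>2 / (2 * c) \<ge> 0"
    using assms by simp
  ultimately show ?thesis by linarith
qed

lemma sum_sum_remove:
  fixes h :: "nat \<Rightarrow> real"
  shows "(\<Sum>j<m. \<Sum>l\<in>{..<m} - {j}. h l) = (real m - 1) * (\<Sum>l<m. h l)"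
proof -
  have "(\<Sum>j<m. \<Sum>l\<in>{..<m} - {j}. h l) = (\<Sum>j<m. (\<Sum>l<m. h l) - h j)"
    by (intro sum.cong refl) (simp add: sum_diff1)
  also have "\<dots> = (real m - 1) * (\<Sum>l<m. h l)"
    by (simp add: sum_subtractf algebra_simps)
  finally show ?thesis .
qed

text \<open>The multiplier and residual updates in one identity: with \<open>r' = r + u\<close>
  and \<open>\<lambda>' = \<lambda> - \<rho> r'\<close>, the \<open>\<rho>\<close>-terms cancel.\<close>
lemma augmented_lagrangian_step_identity:
  fixes lam r u :: "'a::real_inner"
  shows "(lam - beta *\<^sub>R r) \<bullet> u - (lam - rho *\<^sub>R (r + u)) \<bullet> (r + u)
           + (beta - rho) * (norm (r + u))\<^sup>2 - beta / 2 * (norm (r + u))\<^sup>2 - beta / 2 * (norm u)\<^sup>2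
         = - (lam \<bullet> r) + beta / 2 * (norm r)\<^sup>2"
  by (simp add: power2_norm_eq_inner inner_add_left inner_add_right inner_diff_left
      inner_diff_right inner_commute algebra_simps)

text \<open>The update at iteration \<open>k\<close> is
  not yet drawn: \<open>X j\<close> is \<open>x\<^sup>k\<^sup>+\<^sup>1\<close> in the event \<open>i\<^sub>k = j\<close>, so the conditional
  expectation over the uniform \<open>i\<^sub>k\<close> is the average over \<open>j < m\<close>.\<close>
locale async_pd_iteration =
  fixes blk :: "'n::finite \<Rightarrow> nat" and m :: nat
    and f :: "real^'n \<Rightarrow> real" and grad :: "real^'n \<Rightarrow> real^'n"
    and g :: "nat \<Rightarrow> real^'n \<Rightarrow> ereal"
    and A :: "real^'n^'q::finite" and b :: "real^'q"
    and L :: "nat \<Rightarrow> real" and Lr :: real and P :: "real^'n^'n"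
    and beta alpha :: real and tau :: nat
    and xs :: "nat \<Rightarrow> real^'n" and r lam :: "nat \<Rightarrow> real^'q"
    and xhat :: "nat \<Rightarrow> real^'n" and J :: "nat \<Rightarrow> nat set" and idx :: "nat \<Rightarrow> nat"
    and k :: nat and X :: "nat \<Rightarrow> real^'n"
  assumes m_pos: "m \<ge> 1"
    and blk_less: "\<And>c. blk c < m"
    and blk_surj: "\<And>i. i < m \<Longrightarrow> \<exists>c. blk c = i"
    and f_convex: "convex_on UNIV f"
    and f_grad: "\<And>y. (f has_derivative (\<lambda>h. grad y \<bullet> h)) (at y)"
    and g_block: "\<And>i z. i < m \<Longrightarrow> g i z = g i (blockproj blk i z)"
    and g_proper: "\<And>i. i < m \<Longrightarrow> proper_fun (g i)"
    and g_convex: "\<And>i. i < m \<Longrightarrow> convex_fun (g i)"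
    and L_pos: "\<And>i. i < m \<Longrightarrow> L i > 0"
    and Lip_i: "\<And>i z y. i < m \<Longrightarrow> norm (blockproj blk i (grad (z + blockproj blk i y) - grad z))
                  \<le> L i * norm (blockproj blk i y)"
    and Lip_r: "\<And>i z y. i < m \<Longrightarrow> norm (grad (z + blockproj blk i y) - grad z)
                  \<le> Lr * norm (blockproj blk i y)"
    and P_blockdiag: "\<And>c c'. blk c \<noteq> blk c' \<Longrightarrow> P $ c $ c' = 0"
    and P_sym: "transpose P = P"
    and alpha_pos: "alpha > 0"
    and r_init: "r 0 = A *v xs 0 - b"
    and delay_set: "J k \<subseteq> {k - tau..<k}"
    and xhat_k: "xhat k = xs k + (\<Sum>e\<in>J k. xs e - xs (e + 1))"
    and hist_idx: "\<And>d. d < k \<Longrightarrow> idx d < m"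
    and hist_other: "\<And>d c. d < k \<Longrightarrow> blk c \<noteq> idx d \<Longrightarrow> xs (d + 1) $ c = xs d $ c"
    and hist_r: "\<And>d. d < k \<Longrightarrow> r (d + 1) = r d + A *v blockproj blk (idx d) (xs (d + 1) - xs d)"
    and step_other: "\<And>j c. j < m \<Longrightarrow> blk c \<noteq> j \<Longrightarrow> X j $ c = xs k $ c"
    and step_min: "\<And>j z. j < m \<Longrightarrow> (\<And>c. blk c \<noteq> j \<Longrightarrow> z $ c = xs k $ c) \<Longrightarrow>
        ereal (blockproj blk j (grad (xhat k) - transpose A *v (lam k - beta *\<^sub>R r k)) \<bullet> X j
               + 1/2 * qf P (blockproj blk j (X j - xs k))) + g j (X j)
        \<le> ereal (blockproj blk j (grad (xhat k) - transpose A *v (lam k - beta *\<^sub>R r k)) \<bullet> z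
               + 1/2 * qf P (blockproj blk j (z - xs k))) + g j z"
begin

abbreviation Lmax :: real where "Lmax \<equiv> Max (L ` {..<m})"

lemma Lmax_pos: "Lmax > 0"
proof -
  have "L 0 \<le> Lmax"
    using m_pos by (intro Max_ge) auto
  moreover have "L 0 > 0"
    using L_pos m_pos by simp
  ultimately show ?thesis by linarith
qed

lemma Lr_nonneg: "Lr \<ge> 0"
proof -
  obtain c where c: "blk c = 0"
    using blk_surj m_pos by auto
  define e :: "real^'n" where "e = axis c 1"
  have e_block: "blockproj blk 0 e = e"
    by (simp add: e_def vec_eq_iff axis_def c)
  have "0 \<le> norm (grad (xs 0 + blockproj blk 0 e) - grad (xs 0))"
    by simp
  also have "\<dots> \<le> Lr * norm e"
    using Lip_r[of 0 "xs 0" e] m_pos e_block by simp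
  finally show ?thesis
    by (simp add: e_def zero_le_mult_iff)
qed

lemma history_step_blockproj:
  "d < k \<Longrightarrow> blockproj blk (idx d) (xs (d + 1) - xs d) = xs (d + 1) - xs d"
  using hist_other by (auto simp: vec_eq_iff)

lemma step_blockproj: "j < m \<Longrightarrow> blockproj blk j (X j - xs k) = X j - xs k"
  using step_other by (auto simp: vec_eq_iff)

lemma residual_eq: "d \<le> k \<Longrightarrow> r d = A *v xs d - b"
proof (induction d)
  case 0
  then show ?case using r_init by simp
next
  case (Suc d)
  then show ?case
    using hist_r[of d] history_step_blockproj[of d] by (simp add: matrix_vector_mult_diff_distrib)
qed

lemma g_not_MInfty: "i < m \<Longrightarrow> g i z \<noteq> -\<infinity>"
  using g_proper unfolding proper_fun_def by blast

lemma g_step_other: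
  assumes "l < m" "l \<noteq> j" "j < m"
  shows "g l (X j) = g l (xs k)"
proof -
  have "blockproj blk l (X j) = blockproj blk l (xs k)"
    using assms step_other by (auto simp: vec_eq_iff)
  then show ?thesis
    using g_block[OF assms(1), of "X j"] g_block[OF assms(1), of "xs k"] by simp
qed

lemma block_competitor:
  fixes x :: "real^'n"
  assumes "j < m"
  defines "z \<equiv> xs k + blockproj blk j (x - xs k)"
  shows "\<And>c. blk c \<noteq> j \<Longrightarrow> z $ c = xs k $ c" and "g j z = g j x"
proof -
  show "z $ c = xs k $ c" if "blk c \<noteq> j" for c
    using that by (simp add: z_def)
  have "blockproj blk j z = blockproj blk j x"
    by (simp add: z_def vec_eq_iff)
  then show "g j z = g j x"
    using g_block[OF assms(1), of z] g_block[OF assms(1), of x] by simp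
qed

lemma g_step_finite:
  assumes j: "j < m" and "g j x \<noteq> \<infinity>"
  shows "\<bar>g j (X j)\<bar> \<noteq> \<infinity>"
proof -
  define z where "z = xs k + blockproj blk j (x - xs k)"
  have "ereal (blockproj blk j (grad (xhat k) - transpose A *v (lam k - beta *\<^sub>R r k)) \<bullet> X j
               + 1/2 * qf P (blockproj blk j (X j - xs k))) + g j (X j)
        \<le> ereal (blockproj blk j (grad (xhat k) - transpose A *v (lam k - beta *\<^sub>R r k)) \<bullet> z
               + 1/2 * qf P (blockproj blk j (z - xs k))) + g j x"
    using step_min[OF j block_competitor(1)[OF j]] block_competitor(2)[OF j] by (simp add: z_def)
  also have "\<dots> < \<infinity>"
    using assms(2) g_not_MInfty[OF j, of x] by (cases "g j x") auto
  finally show ?thesis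
    using g_not_MInfty[OF j] by auto
qed

text \<open>One block update, compared with \<open>x\<close>: the three-point inequality of the block
  subproblem plus the block descent lemma for \<open>f\<close>. Only the delay error
  \<open>\<nabla>f(x\<^sup>k) - \<nabla>f(xhat\<^sup>k)\<close>, absorbed by Young's inequality, is left over.\<close>
lemma block_step_bound:
  assumes j: "j < m" and gX: "g j (X j) = ereal a" and gx: "g j x = ereal c"
  defines "w \<equiv> transpose A *v (lam k - beta *\<^sub>R r k)"
  shows "f (X j) + a + 1/2 * qf P (X j - x)
           + 1/2 * (qf P (X j - xs k) - (L j + alpha * Lmax) * (norm (X j - xs k))\<^sup>2) - w \<bullet> (X j - xs k)
         \<le> f (xs k) + c + (norm (blockproj blk j (grad (xs k) - grad (xhat k))))\<^sup>2 / (2 * (alpha * Lmax))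
           - (grad (xhat k) - w) \<bullet> blockproj blk j (xs k - x) + 1/2 * qf P (xs k - x)"
proof -
  define D where "D = X j - xs k"
  define z where "z = xs k + blockproj blk j (x - xs k)"
  define v where "v = blockproj blk j (xs k - x)"
  have D_block: "blockproj blk j D = D"
    using step_blockproj[OF j] by (simp add: D_def)
  have X_eq: "X j = xs k + D"
    by (simp add: D_def)
  have z_off: "\<And>c. blk c \<noteq> j \<Longrightarrow> z $ c = xs k $ c" and gz: "g j z = ereal c"
    using block_competitor[OF j, where x = x] gx by (simp_all add: z_def)
  have X_z: "blockproj blk j (X j - z) = D + v"
    using step_other[OF j] by (auto simp: vec_eq_iff D_def z_def v_def)
  have "a + blockproj blk j (grad (xhat k) - w) \<bullet> (X j - z)
      \<le> c + 1/2 * qf P (blockproj blk j (z - xs k))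
        - 1/2 * qf P (blockproj blk j (X j - xs k)) - 1/2 * qf P (blockproj blk j (z - X j))"
    unfolding w_def
    by (rule block_prox_three_point[OF g_convex[OF j] step_min[OF j] step_other[OF j] z_off gX gz P_sym])
  moreover have "blockproj blk j (grad (xhat k) - w) \<bullet> (X j - z) = (grad (xhat k) - w) \<bullet> (D + v)"
    using X_z by (simp add: blockproj_inner_commute)
  moreover have "blockproj blk j (z - xs k) = - v" and "blockproj blk j (z - X j) = - (D + v)"
    using step_other[OF j] by (auto simp: z_def v_def D_def vec_eq_iff)
  then have "qf P (blockproj blk j (z - xs k)) = qf P v"
    and "qf P (blockproj blk j (z - X j)) = qf P (D + v)"
    by (simp_all only: qf_uminus)
  moreover have "qf P (blockproj blk j (X j - xs k)) = qf P D"
    using D_block by (simp add: D_def)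
  ultimately have three_point:
    "a + (grad (xhat k) - w) \<bullet> (D + v) \<le> c + 1/2 * qf P v - 1/2 * qf P D - 1/2 * qf P (D + v)"
    by linarith
  have descent: "f (X j) \<le> f (xs k) + grad (xs k) \<bullet> D + L j / 2 * (norm D)\<^sup>2"
    using block_descent_lemma[OF f_grad Lip_i[OF j], of "xs k" D] D_block X_eq by simp
  have "qf P (X j - x) = qf P (xs k - x) - qf P v + qf P (blockproj blk j (xs k - x + D))"
    using qf_add_blockproj[OF P_blockdiag P_sym D_block, of "xs k - x"] X_eq
    by (simp add: v_def algebra_simps)
  also have "blockproj blk j (xs k - x + D) = D + v"
    using D_block by (simp add: blockproj_add v_def)
  finally have P_split: "qf P (X j - x) = qf P (xs k - x) - qf P v + qf P (D + v)" .
  have "(grad (xs k) - grad (xhat k)) \<bullet> D = blockproj blk j (grad (xs k) - grad (xhat k)) \<bullet> D"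
    using D_block by (metis blockproj_inner_commute)
  also have "\<dots> \<le> norm (blockproj blk j (grad (xs k) - grad (xhat k))) * norm D"
    by (rule norm_cauchy_schwarz)
  also have "\<dots> \<le> (norm (blockproj blk j (grad (xs k) - grad (xhat k))))\<^sup>2 / (2 * (alpha * Lmax))
                  + alpha * Lmax / 2 * (norm D)\<^sup>2"
    using alpha_pos Lmax_pos by (intro mult_le_sq_div_add_sq) simp
  finally have young: "(grad (xs k) - grad (xhat k)) \<bullet> D
      \<le> (norm (blockproj blk j (grad (xs k) - grad (xhat k))))\<^sup>2 / (2 * (alpha * Lmax))
        + alpha * Lmax / 2 * (norm D)\<^sup>2" .
  show ?thesis
    using three_point descent P_split young
    unfolding D_def[symmetric] v_def[symmetric]
    by (simp add: inner_add_right inner_diff_left algebra_simps)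
qed

lemma delay_steps:
  "xs k = xhat k + (\<Sum>d\<in>J k. xs (d + 1) - xs d)"
  "finite (J k)"
  "\<And>d. d \<in> J k \<Longrightarrow> idx d < m \<and> blockproj blk (idx d) (xs (d + 1) - xs d) = xs (d + 1) - xs d"
proof -
  have "(\<Sum>e\<in>J k. xs e - xs (e + 1)) = - (\<Sum>d\<in>J k. xs (d + 1) - xs d)"
    by (simp add: sum_negf[symmetric])
  then show "xs k = xhat k + (\<Sum>d\<in>J k. xs (d + 1) - xs d)"
    using xhat_k by simp
  show "finite (J k)"
    using delay_set finite_subset by blast
  show "idx d < m \<and> blockproj blk (idx d) (xs (d + 1) - xs d) = xs (d + 1) - xs d" if "d \<in> J k" for d
    using that delay_set hist_idx history_step_blockproj by auto
qed

lemma sum_norm_delay_steps_sq_le: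
  "(\<Sum>d\<in>J k. norm (xs (d + 1) - xs d))\<^sup>2 \<le> real tau * (\<Sum>d\<in>{k - tau..<k}. (norm (xs (d + 1) - xs d))\<^sup>2)"
proof -
  have "(\<Sum>d\<in>J k. norm (xs (d + 1) - xs d))\<^sup>2
      \<le> (\<Sum>d\<in>J k. (norm (xs (d + 1) - xs d))\<^sup>2) * real (card (J k))"
    by (rule sum_squared_le_sum_of_squares)
  also have "\<dots> \<le> (\<Sum>d\<in>{k - tau..<k}. (norm (xs (d + 1) - xs d))\<^sup>2) * real tau"
  proof (rule mult_mono)
    show "(\<Sum>d\<in>J k. (norm (xs (d + 1) - xs d))\<^sup>2) \<le> (\<Sum>d\<in>{k - tau..<k}. (norm (xs (d + 1) - xs d))\<^sup>2)"
      using delay_set by (intro sum_mono2) auto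
    have "card (J k) \<le> card {k - tau..<k}"
      using delay_set by (intro card_mono) auto
    then show "real (card (J k)) \<le> real tau"
      by simp
  qed (auto intro: sum_nonneg)
  finally show ?thesis
    by (simp add: mult.commute)
qed

text \<open>The delayed point \<open>xhat\<^sup>k\<close> is reached from \<open>x\<^sup>k\<close> by at most \<open>\<tau>\<close> block steps,
  which bounds both the descent gap at \<open>xhat\<^sup>k\<close> and the gradient error.\<close>
lemma delay_bound:
  "f (xs k) - f x - grad (xhat k) \<bullet> (xs k - x)
     + (norm (grad (xs k) - grad (xhat k)))\<^sup>2 / (2 * (alpha * Lmax))
   \<le> (Lr / Lmax * Lr * real tau / alpha + 2 * Lr * real tau) / 2
       * (\<Sum>d\<in>{k - tau..<k}. (norm (xs (d + 1) - xs d))\<^sup>2)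
     + 1/2 * (\<Sum>d\<in>{k - tau..<k}. qf (blkdiagL blk L) (xs (d + 1) - xs d))"
proof -
  define N where "N = (\<Sum>d\<in>J k. norm (xs (d + 1) - xs d))"
  define S where "S = (\<Sum>d\<in>{k - tau..<k}. (norm (xs (d + 1) - xs d))\<^sup>2)"
  define SL where "SL = (\<Sum>d\<in>{k - tau..<k}. qf (blkdiagL blk L) (xs (d + 1) - xs d))"
  have xs_k: "xs k = xhat k + (\<Sum>d\<in>J k. xs (d + 1) - xs d)"
    by (rule delay_steps(1))
  have N_sq: "N\<^sup>2 \<le> real tau * S"
    unfolding N_def S_def by (rule sum_norm_delay_steps_sq_le)
  have S_nonneg: "S \<ge> 0"
    by (simp add: S_def sum_nonneg)
  have descent: "f (xs k) \<le> f (xhat k) + grad (xhat k) \<bullet> (xs k - xhat k)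
      + (\<Sum>d\<in>J k. L (idx d) / 2 * (norm (xs (d + 1) - xs d))\<^sup>2) + Lr / 2 * N\<^sup>2"
    using block_steps_descent_lemma[where B = idx and D = "\<lambda>d. xs (d + 1) - xs d", OF delay_steps(2,3) f_grad Lip_i Lip_r Lr_nonneg, where y = "xhat k"]
    unfolding N_def by (subst (1 2) xs_k) simp
  have "(\<Sum>d\<in>J k. qf (blkdiagL blk L) (xs (d + 1) - xs d))
      = (\<Sum>d\<in>J k. L (idx d) * (norm (xs (d + 1) - xs d))\<^sup>2)"
    using delay_steps(3) by (intro sum.cong refl qf_blkdiagL_blockproj) blast
  then have "(\<Sum>d\<in>J k. L (idx d) / 2 * (norm (xs (d + 1) - xs d))\<^sup>2)
      = 1/2 * (\<Sum>d\<in>J k. qf (blkdiagL blk L) (xs (d + 1) - xs d))"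
    by (simp add: sum_distrib_left)
  also have "\<dots> \<le> 1/2 * SL"
    unfolding SL_def using delay_set blk_less L_pos
    by (intro mult_left_mono sum_mono2 qf_blkdiagL_nonneg) (auto intro: less_imp_le)
  finally have L_part: "(\<Sum>d\<in>J k. L (idx d) / 2 * (norm (xs (d + 1) - xs d))\<^sup>2) \<le> 1/2 * SL" .
  have tangent: "f (xhat k) + grad (xhat k) \<bullet> (x - xhat k) \<le> f x"
    by (rule convex_on_gradient_inequality[OF f_convex f_grad])
  have "norm (grad (xs k) - grad (xhat k)) \<le> Lr * N"
    using norm_grad_sum_block_steps_le[where B = idx and D = "\<lambda>d. xs (d + 1) - xs d", OF delay_steps(2,3) Lip_r, where y = "xhat k"]
    unfolding N_def by (subst xs_k) simp
  then have "(norm (grad (xs k) - grad (xhat k)))\<^sup>2 \<le> Lr\<^sup>2 * N\<^sup>2"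
    by (metis norm_ge_zero power_mono power_mult_distrib)
  also have "\<dots> \<le> Lr\<^sup>2 * (real tau * S)"
    using N_sq by (intro mult_left_mono) auto
  finally have "(norm (grad (xs k) - grad (xhat k)))\<^sup>2 / (2 * (alpha * Lmax))
      \<le> Lr\<^sup>2 * (real tau * S) / (2 * (alpha * Lmax))"
    using alpha_pos Lmax_pos by (intro divide_right_mono) auto
  also have "\<dots> = (Lr / Lmax * Lr * real tau / alpha) / 2 * S"
    using alpha_pos Lmax_pos by (simp add: power2_eq_square field_simps)
  finally have error: "(norm (grad (xs k) - grad (xhat k)))\<^sup>2 / (2 * (alpha * Lmax))
      \<le> (Lr / Lmax * Lr * real tau / alpha) / 2 * S" .
  have "Lr / 2 * N\<^sup>2 \<le> Lr / 2 * (real tau * S)"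
    using N_sq Lr_nonneg by (intro mult_left_mono) auto
  also have "\<dots> \<le> Lr * real tau * S"
    using Lr_nonneg S_nonneg by simp
  finally have Lr_part: "Lr / 2 * N\<^sup>2 \<le> Lr * real tau * S" .
  have "(Lr / Lmax * Lr * real tau / alpha + 2 * Lr * real tau) / 2 * S
      = (Lr / Lmax * Lr * real tau / alpha) / 2 * S + Lr * real tau * S"
    by (simp add: algebra_simps)
  moreover have "grad (xhat k) \<bullet> (xs k - xhat k) - grad (xhat k) \<bullet> (x - xhat k)
      = grad (xhat k) \<bullet> (xs k - x)"
    by (simp add: inner_diff_right)
  ultimately show ?thesis
    using descent L_part tangent error Lr_part unfolding S_def[symmetric] SL_def[symmetric]
    by linarith
qed


lemma averaged_step_bound:
  fixes rho :: real and x :: "real^'n" and R Lam :: "nat \<Rightarrow> real^'q"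
  assumes gX: "\<And>j. j < m \<Longrightarrow> g j (X j) = ereal (gX j)"
    and gx: "\<And>j. j < m \<Longrightarrow> g j x = ereal (gx j)"
    and x_feas: "A *v x = b"
  defines "R \<equiv> \<lambda>j. r k + A *v blockproj blk j (X j - xs k)"
    and "Lam \<equiv> \<lambda>j. lam k - rho *\<^sub>R R j"
  shows "(\<Sum>j<m. f (X j) + gX j
            + (- (Lam j \<bullet> R j) + (beta - rho) * (norm (R j))\<^sup>2 - beta / 2 * (norm (R j))\<^sup>2
               + 1/2 * qf P (X j - x))
            + 1/2 * qf (P - blkdiagL blk L - (alpha * Lmax) *\<^sub>R mat 1 - beta *\<^sub>R (transpose A ** A))
                      (X j - xs k))
         - (Lr / Lmax * Lr * real tau / alpha + 2 * Lr * real tau) / 2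
             * (\<Sum>d\<in>{k - tau..<k}. (norm (xs (d + 1) - xs d))\<^sup>2)
         - 1/2 * (\<Sum>d\<in>{k - tau..<k}. qf (blkdiagL blk L) (xs (d + 1) - xs d))
       \<le> (real m - 1) * (f (xs k) + (- (lam k \<bullet> r k) + beta * (norm (r k))\<^sup>2))
         + real m * (- beta / 2 * (norm (r k))\<^sup>2 + 1/2 * qf P (xs k - x))
         + (f x + (\<Sum>j<m. gx j))"
proof -
  define w where "w = transpose A *v (lam k - beta *\<^sub>R r k)"
  define e where "e = grad (xs k) - grad (xhat k)"
  define M where "M = P - blkdiagL blk L - (alpha * Lmax) *\<^sub>R mat 1 - beta *\<^sub>R (transpose A ** A)"
  define EE where "EE = (\<lambda>j. (norm (blockproj blk j e))\<^sup>2 / (2 * (alpha * Lmax)))"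
  have per_block: "f (X j) + gX j
       + (- (Lam j \<bullet> R j) + (beta - rho) * (norm (R j))\<^sup>2 - beta / 2 * (norm (R j))\<^sup>2
          + 1/2 * qf P (X j - x))
       + 1/2 * qf M (X j - xs k)
     \<le> f (xs k) + gx j + EE j - (grad (xhat k) - w) \<bullet> blockproj blk j (xs k - x)
       + 1/2 * qf P (xs k - x) - lam k \<bullet> r k + beta / 2 * (norm (r k))\<^sup>2" if j: "j < m" for j
  proof -
    define D where "D = X j - xs k"
    have "w \<bullet> D = (lam k - beta *\<^sub>R r k) \<bullet> (A *v D)"
      by (simp add: w_def dot_lmul_matrix)
    moreover have "R j = r k + A *v D"
      using step_blockproj[OF j] by (simp add: R_def D_def)
    ultimately have "- (Lam j \<bullet> R j) + (beta - rho) * (norm (R j))\<^sup>2 - beta / 2 * (norm (R j))\<^sup>2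
        = - (lam k \<bullet> r k) + beta / 2 * (norm (r k))\<^sup>2 - w \<bullet> D + beta / 2 * (norm (A *v D))\<^sup>2"
      using augmented_lagrangian_step_identity[where lam = "lam k" and r = "r k" and u = "A *v D"
          and beta = beta and rho = rho]
      by (simp add: Lam_def)
    moreover have "qf M D = qf P D - L j * (norm D)\<^sup>2 - alpha * Lmax * (norm D)\<^sup>2 - beta * (norm (A *v D))\<^sup>2"
      unfolding M_def D_def by (rule qf_step_matrix_blockproj[OF step_blockproj[OF j]])
    ultimately show ?thesis
      using block_step_bound[OF j gX[OF j] gx[OF j]]
      unfolding w_def[symmetric] D_def[symmetric] EE_def e_def
      by (simp add: algebra_simps)
  qed
  have "(\<Sum>j<m. f (X j) + gX j
          + (- (Lam j \<bullet> R j) + (beta - rho) * (norm (R j))\<^sup>2 - beta / 2 * (norm (R j))\<^sup>2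
             + 1/2 * qf P (X j - x))
          + 1/2 * qf M (X j - xs k))
      \<le> (\<Sum>j<m. f (xs k) + gx j + EE j - (grad (xhat k) - w) \<bullet> blockproj blk j (xs k - x)
          + 1/2 * qf P (xs k - x) - lam k \<bullet> r k + beta / 2 * (norm (r k))\<^sup>2)"
    by (rule sum_mono) (rule per_block, simp)
  also have "\<dots> = real m * (f (xs k) + 1/2 * qf P (xs k - x) - lam k \<bullet> r k + beta / 2 * (norm (r k))\<^sup>2)
      + (\<Sum>j<m. gx j) + (\<Sum>j<m. EE j) - (grad (xhat k) - w) \<bullet> (\<Sum>j<m. blockproj blk j (xs k - x))"
    by (simp add: sum.distrib sum_subtractf inner_sum_right algebra_simps)
  also have "(\<Sum>j<m. EE j) = (norm e)\<^sup>2 / (2 * (alpha * Lmax))"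
    by (simp add: EE_def sum_divide_distrib[symmetric] sum_norm_blockproj_sq[OF blk_less])
  also have "(grad (xhat k) - w) \<bullet> (\<Sum>j<m. blockproj blk j (xs k - x))
      = grad (xhat k) \<bullet> (xs k - x) - (lam k \<bullet> r k - beta * (norm (r k))\<^sup>2)"
  proof -
    have "w \<bullet> u = (lam k - beta *\<^sub>R r k) \<bullet> (A *v u)" for u
      by (simp add: w_def dot_lmul_matrix)
    moreover have "A *v (xs k - x) = r k"
      using residual_eq[of k] x_feas by (simp add: matrix_vector_mult_diff_distrib)
    ultimately have "w \<bullet> (xs k - x) = (lam k - beta *\<^sub>R r k) \<bullet> r k"
      by metis
    then show ?thesis
      by (simp add: sum_blockproj[OF blk_less] inner_diff_left power2_norm_eq_inner)
  qed
  finally show ?thesis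
    using delay_bound[of x] unfolding M_def e_def
    by (simp add: algebra_simps)
qed


lemma objective_at_step:
  assumes j: "j < m"
  shows "(\<Sum>l<m. g l (X j)) = g j (X j) + (\<Sum>l\<in>{..<m} - {j}. g l (xs k))"
proof -
  have "(\<Sum>l<m. g l (X j)) = g j (X j) + (\<Sum>l\<in>{..<m} - {j}. g l (X j))"
    using j by (simp add: sum.remove)
  also have "(\<Sum>l\<in>{..<m} - {j}. g l (X j)) = (\<Sum>l\<in>{..<m} - {j}. g l (xs k))"
    using j by (intro sum.cong refl) (auto simp: g_step_other)
  finally show ?thesis .
qed

text \<open>In extended-real arithmetic the inequality is trivial when \<open>F(x\<^sup>k) = \<infinity>\<close> and \<open>m \<ge> 2\<close>;
  otherwise every term is finite (for \<open>m = 1\<close> the factor \<open>1 - 1/m\<close> is \<open>0\<close>, and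
  \<open>0 \<cdot> \<infinity> = 0\<close>) and it is \<open>averaged_step_bound\<close> divided by \<open>m\<close>.\<close>
lemma one_step_bound:
  fixes rho :: real and x :: "real^'n"
    and F :: "real^'n \<Rightarrow> ereal" and R Lam :: "nat \<Rightarrow> real^'q" and Lc kappa :: real
  defines "F \<equiv> (\<lambda>z. ereal (f z) + (\<Sum>i<m. g i z))"
    and "Lc \<equiv> Max (L ` {..<m})"
    and "kappa \<equiv> Lr / Lc"
    and "R \<equiv> (\<lambda>j. r k + A *v blockproj blk j (X j - xs k))"
    and "Lam \<equiv> (\<lambda>j. lam k - rho *\<^sub>R R j)"
  assumes x_feas: "A *v x = b"
    and x_dom: "F x < \<infinity>"
  shows
    "ereal (1 / real m) * (\<Sum>j<m. F (X j) - F x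
         + ereal (- (Lam j \<bullet> R j) + (beta - rho) * (norm (R j))\<^sup>2 - beta / 2 * (norm (R j))\<^sup>2
                  + 1/2 * qf P (X j - x)))
     + ereal (1/2 * (1 / real m) * (\<Sum>j<m. qf (P - blkdiagL blk L - (alpha * Lc) *\<^sub>R mat 1
                                           - beta *\<^sub>R (transpose A ** A)) (X j - xs k))
         - (kappa * Lr * real tau / alpha + 2 * Lr * real tau) / (2 * real m)
             * (\<Sum>d\<in>{k - tau..<k}. (norm (xs (d + 1) - xs d))\<^sup>2)
         - 1 / (2 * real m) * (\<Sum>d\<in>{k - tau..<k}. qf (blkdiagL blk L) (xs (d + 1) - xs d)))
     \<le> ereal (1 - 1 / real m) * (F (xs k) - F x + ereal (- (lam k \<bullet> r k) + beta * (norm (r k))\<^sup>2))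
       + ereal (- beta / 2 * (norm (r k))\<^sup>2 + 1/2 * qf P (xs k - x))"
proof -
  define gx where "gx l = real_of_ereal (g l x)" for l
  define gX where "gX j = real_of_ereal (g j (X j))" for j
  define TT where "TT j = - (Lam j \<bullet> R j) + (beta - rho) * (norm (R j))\<^sup>2 - beta / 2 * (norm (R j))\<^sup>2
                  + 1/2 * qf P (X j - x)" for j
  define QM where "QM j = qf (P - blkdiagL blk L - (alpha * Lc) *\<^sub>R mat 1
                             - beta *\<^sub>R (transpose A ** A)) (X j - xs k)" for j
  define S where "S = (\<Sum>d\<in>{k - tau..<k}. (norm (xs (d + 1) - xs d))\<^sup>2)"
  define SL where "SL = (\<Sum>d\<in>{k - tau..<k}. qf (blkdiagL blk L) (xs (d + 1) - xs d))"
  define K where "K = kappa * Lr * real tau / alpha + 2 * Lr * real tau"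
  define ck where "ck = - (lam k \<bullet> r k) + beta * (norm (r k))\<^sup>2"
  define Vk where "Vk = - beta / 2 * (norm (r k))\<^sup>2 + 1/2 * qf P (xs k - x)"
  define Fx where "Fx = f x + (\<Sum>l<m. gx l)"
  have m_real: "real m > 0"
    using m_pos by simp
  have gx_finite: "g l x \<noteq> \<infinity>" if "l < m" for l
  proof -
    have "(\<Sum>i<m. g i x) \<noteq> \<infinity>"
      using x_dom by (auto simp: F_def)
    then show ?thesis
      using that by (auto simp: sum_Pinfty)
  qed
  have gx_eq: "g l x = ereal (gx l)" if "l < m" for l
    using gx_finite[OF that] g_not_MInfty[OF that, of x] by (cases "g l x") (auto simp: gx_def)
  have gX_eq: "g j (X j) = ereal (gX j)" if "j < m" for j
    using g_step_finite[OF that gx_finite[OF that]] by (simp add: gX_def ereal_real')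
  have F_x: "F x = ereal Fx"
    by (simp add: F_def Fx_def gx_eq)
  have core: "(\<Sum>j<m. f (X j) + gX j + TT j + 1/2 * QM j) - K / 2 * S - 1/2 * SL
      \<le> (real m - 1) * (f (xs k) + ck) + real m * Vk + Fx"
    using averaged_step_bound[OF gX_eq gx_eq x_feas, where rho = rho]
    unfolding TT_def QM_def K_def S_def SL_def ck_def Vk_def Fx_def R_def Lam_def kappa_def Lc_def
    by simp
  show ?thesis
  proof (cases "2 \<le> m \<and> (\<exists>l<m. g l (xs k) = \<infinity>)")
    case True
    then have "F (xs k) = \<infinity>"
      by (auto simp: F_def sum_Pinfty)
    moreover have "1 - 1 / real m > 0"
      using True by (simp add: field_simps)
    ultimately have RHS_infinite: "ereal (1 - 1 / real m) * (F (xs k) - F x + ereal ck) = \<infinity>"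
      using True by (simp add: F_x)
    show ?thesis
      unfolding ck_def[symmetric] RHS_infinite by simp
  next
    case False
    define gk where "gk l = real_of_ereal (g l (xs k))" for l
    have gk_eq: "g l (xs k) = ereal (gk l)" if "l < m" "2 \<le> m" for l
      using False that g_not_MInfty[OF that(1)] by (cases "g l (xs k)") (auto simp: gk_def)
    have F_X: "F (X j) = ereal (f (X j) + gX j + (\<Sum>l\<in>{..<m} - {j}. gk l))" if "j < m" for j
    proof -
      have "(\<Sum>l\<in>{..<m} - {j}. g l (xs k)) = (\<Sum>l\<in>{..<m} - {j}. ereal (gk l))"
        using that by (intro sum.cong refl gk_eq) auto
      then show ?thesis
        using objective_at_step[OF that] gX_eq[OF that] by (simp add: F_def)
    qed
    have RHS: "ereal (1 - 1 / real m) * (F (xs k) - F x + ereal ck)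
        = ereal ((1 - 1 / real m) * (f (xs k) + (\<Sum>l<m. gk l) - Fx + ck))"
    proof (cases "m = 1")
      case True
      then show ?thesis
        by (simp add: zero_ereal_def[symmetric])
    next
      case False
      then have "F (xs k) = ereal (f (xs k) + (\<Sum>l<m. gk l))"
        using m_pos by (simp add: F_def gk_eq)
      then show ?thesis
        by (simp add: F_x)
    qed
    define C where "C = (\<Sum>j<m. f (X j) + gX j + TT j + 1/2 * QM j)"
    define G where "G = (\<Sum>l<m. gk l)"
    define Q where "Q = (\<Sum>j<m. QM j)"
    define T where "T = (\<Sum>j<m. f (X j) + gX j + (\<Sum>l\<in>{..<m} - {j}. gk l) - Fx + TT j)"
    have T_eq: "T = C - 1/2 * Q + (real m - 1) * G - real m * Fx"
      by (simp add: T_def C_def G_def Q_def sum.distrib sum_subtractf sum_sum_remove sum_distrib_left)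
    have "1 / real m * T + (1/2 * (1 / real m) * Q - K / (2 * real m) * S - 1 / (2 * real m) * SL)
        = (C - K / 2 * S - 1/2 * SL + (real m - 1) * G - real m * Fx) / real m"
      using m_real unfolding T_eq by (simp add: field_simps)
    also have "\<dots> \<le> ((real m - 1) * (f (xs k) + G - Fx + ck) + real m * Vk) / real m"
    proof (rule divide_right_mono)
      have "(real m - 1) * (f (xs k) + G - Fx + ck)
          = (real m - 1) * (f (xs k) + ck) + (real m - 1) * G - real m * Fx + Fx"
        by (simp add: algebra_simps)
      then show "C - K / 2 * S - 1/2 * SL + (real m - 1) * G - real m * Fx
          \<le> (real m - 1) * (f (xs k) + G - Fx + ck) + real m * Vk"
        using core unfolding C_def by linarith
    qed (use m_real in simp)
    also have "\<dots> = (1 - 1 / real m) * (f (xs k) + G - Fx + ck) + Vk"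
      using m_real by (simp add: field_simps)
    finally have "1 / real m * (\<Sum>j<m. f (X j) + gX j + (\<Sum>l\<in>{..<m} - {j}. gk l) - Fx + TT j)
          + (1/2 * (1 / real m) * (\<Sum>j<m. QM j) - K / (2 * real m) * S - 1 / (2 * real m) * SL)
        \<le> (1 - 1 / real m) * (f (xs k) + (\<Sum>l<m. gk l) - Fx + ck) + Vk"
      unfolding T_def Q_def G_def .
    then show ?thesis
      unfolding RHS ck_def[symmetric] Vk_def[symmetric]
      by (simp add: F_X F_x TT_def QM_def K_def S_def SL_def)
  qed
qed

end

theorem mainTheorem10:
  fixes blk :: "'n::finite \<Rightarrow> nat" and m :: nat
    and f :: "real^'n \<Rightarrow> real" and grad :: "real^'n \<Rightarrow> real^'n"
    and g :: "nat \<Rightarrow> real^'n \<Rightarrow> ereal"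
    and A :: "real^'n^'q::finite" and b :: "real^'q"
    and L :: "nat \<Rightarrow> real" and Lr :: real
    and P :: "real^'n^'n"
    and beta rho alpha :: real and tau :: nat
    and xs :: "nat \<Rightarrow> real^'n" and r lam :: "nat \<Rightarrow> real^'q"
    and xhat :: "nat \<Rightarrow> real^'n" and J :: "nat \<Rightarrow> nat set" and idx :: "nat \<Rightarrow> nat"
    and k :: nat and X :: "nat \<Rightarrow> real^'n" and x :: "real^'n"
    and F :: "real^'n \<Rightarrow> ereal" and R Lam :: "nat \<Rightarrow> real^'q"
    and Lc kappa :: real
  defines "F \<equiv> (\<lambda>z. ereal (f z) + (\<Sum>i<m. g i z))"
    and "Lc \<equiv> Max (L ` {..<m})"
    and "kappa \<equiv> Lr / Lc"
    and "R \<equiv> (\<lambda>j. r k + A *v blockproj blk j (X j - xs k))"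
    and "Lam \<equiv> (\<lambda>j. lam k - rho *\<^sub>R R j)"
  assumes blocks: "m \<ge> 1" "\<forall>c. blk c < m" "\<forall>i<m. \<exists>c. blk c = i"
    and f_convex: "convex_on UNIV f"
    and f_grad: "\<forall>y. (f has_derivative (\<lambda>h. grad y \<bullet> h)) (at y)"
    and grad_cont: "continuous_on UNIV grad"
    and g_block: "\<forall>i<m. \<forall>z. g i z = g i (blockproj blk i z)"
    and g_proper: "\<forall>i<m. proper_fun (g i)"
    and g_convex: "\<forall>i<m. convex_fun (g i)"
    and g_lsc: "\<forall>i<m. lsc_fun (g i)"
    and L_pos: "\<forall>i<m. L i > 0"
    and Lip_i: "\<forall>i<m. \<forall>z y. norm (blockproj blk i (grad (z + blockproj blk i y) - grad z))
                  \<le> L i * norm (blockproj blk i y)"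
    and Lip_r: "\<forall>i<m. \<forall>z y. norm (grad (z + blockproj blk i y) - grad z)
                  \<le> Lr * norm (blockproj blk i y)"
    (* P = blkdiag(P_1,...,P_m), each P_i symmetric PSD *)
    and P_blockdiag: "\<forall>c c'. blk c \<noteq> blk c' \<longrightarrow> P $ c $ c' = 0"
    and P_sym: "transpose P = P"
    and P_psd: "\<forall>z. qf P z \<ge> 0"
    and params: "beta > 0" "rho > 0" "alpha > 0"
    and init: "r 0 = A *v xs 0 - b" "lam 0 = 0"
    and delay: "\<forall>d\<le>k. J d \<subseteq> {d - tau..<d} \<and>
                  xhat d = xs d + (\<Sum>e\<in>J d. xs e - xs (e + 1))"
    (* Algorithm 2: the iterations d < k (history) *)
    and hist_idx: "\<forall>d<k. idx d < m"
    and hist_other: "\<forall>d<k. \<forall>c. blk c \<noteq> idx d \<longrightarrow> xs (d + 1) $ c = xs d $ c"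
    and hist_min: "\<forall>d<k. \<forall>z. (\<forall>c. blk c \<noteq> idx d \<longrightarrow> z $ c = xs d $ c) \<longrightarrow>
        ereal (blockproj blk (idx d) (grad (xhat d) - transpose A *v (lam d - beta *\<^sub>R r d)) \<bullet> xs (d + 1)
               + 1/2 * qf P (blockproj blk (idx d) (xs (d + 1) - xs d))) + g (idx d) (xs (d + 1))
        \<le> ereal (blockproj blk (idx d) (grad (xhat d) - transpose A *v (lam d - beta *\<^sub>R r d)) \<bullet> z
               + 1/2 * qf P (blockproj blk (idx d) (z - xs d))) + g (idx d) z"
    and hist_r: "\<forall>d<k. r (d + 1) = r d + A *v blockproj blk (idx d) (xs (d + 1) - xs d)"
    and hist_lam: "\<forall>d<k. lam (d + 1) = lam d - rho *\<^sub>R r (d + 1)"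
    (* iteration k: X j is x^{k+1} when i_k = j *)
    and step_other: "\<forall>j<m. \<forall>c. blk c \<noteq> j \<longrightarrow> X j $ c = xs k $ c"
    and step_min: "\<forall>j<m. \<forall>z. (\<forall>c. blk c \<noteq> j \<longrightarrow> z $ c = xs k $ c) \<longrightarrow>
        ereal (blockproj blk j (grad (xhat k) - transpose A *v (lam k - beta *\<^sub>R r k)) \<bullet> X j
               + 1/2 * qf P (blockproj blk j (X j - xs k))) + g j (X j)
        \<le> ereal (blockproj blk j (grad (xhat k) - transpose A *v (lam k - beta *\<^sub>R r k)) \<bullet> z
               + 1/2 * qf P (blockproj blk j (z - xs k))) + g j z"
    and x_feas: "A *v x = b"
    and x_dom: "F x < \<infinity>"
  shows
    "ereal (1 / real m) * (\<Sum>j<m. F (X j) - F x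
         + ereal (- (Lam j \<bullet> R j) + (beta - rho) * (norm (R j))\<^sup>2 - beta / 2 * (norm (R j))\<^sup>2
                  + 1/2 * qf P (X j - x)))
     + ereal (1/2 * (1 / real m) * (\<Sum>j<m. qf (P - blkdiagL blk L - (alpha * Lc) *\<^sub>R mat 1
                                           - beta *\<^sub>R (transpose A ** A)) (X j - xs k))
         - (kappa * Lr * real tau / alpha + 2 * Lr * real tau) / (2 * real m)
             * (\<Sum>d\<in>{k - tau..<k}. (norm (xs (d + 1) - xs d))\<^sup>2)
         - 1 / (2 * real m) * (\<Sum>d\<in>{k - tau..<k}. qf (blkdiagL blk L) (xs (d + 1) - xs d)))
     \<le> ereal (1 - 1 / real m) * (F (xs k) - F x + ereal (- (lam k \<bullet> r k) + beta * (norm (r k))\<^sup>2))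
       + ereal (- beta / 2 * (norm (r k))\<^sup>2 + 1/2 * qf P (xs k - x))"
proof -
  have delay_k: "J k \<subseteq> {k - tau..<k}" "xhat k = xs k + (\<Sum>e\<in>J k. xs e - xs (e + 1))"
    using delay by simp_all
  interpret async_pd_iteration blk m f grad g A b L Lr P beta alpha tau xs r lam xhat J idx k X
    by unfold_locales
      (fact blocks[rule_format] f_convex f_grad[rule_format] g_block[rule_format]
          g_proper[rule_format] g_convex[rule_format] L_pos[rule_format] Lip_i[rule_format]
          Lip_r[rule_format] P_blockdiag[rule_format] P_sym params(3) init(1) delay_k
          hist_idx[rule_format] hist_other[rule_format] hist_r[rule_format] step_other[rule_format]
          step_min[rule_format])+
  show ?thesis
    using x_feas x_dom unfolding F_def Lc_def kappa_def R_def Lam_def by (rule one_step_bound)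
qed
end
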